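(* For every $t\ge1$, $$\|\Psi_{t,1}\|\le\sqrt{\frac{\|W+LVL^\top\|\kappa_F^2}{\lambda_{\min}(W)(1-\gamma_F^2)}},\qquad \|\Sigma_t-\Sigma\|\le\kappa_F^2\gamma_F^{t-1}\|W-\Sigma\|\sqrt{\frac{\|W+LVL^\top\|}{\lambda_{\min}(W)(1-\gamma_F^2)}},$$ $$\|L_t-L\|\le\frac{\kappa_F^3\gamma_F^{t}\|W-\Sigma\|\|C\|}{\lambda_{\min}(V)}\sqrt{\frac{\|W+LVL^\top\|}{\lambda_{\min}(W)(1-\gamma_F^2)}}.$$
   Context: Standing setup. Consider the discrete-time LTI system $x_{t+1}=Ax_t+w_t$, $y_t=Cx_t+v_t$ ($t\ge0$) with $x_t\in\mathbb R^n$, $y_t\in\mathbb R^p$, $x_0=0$, $w_t\overset{iid}{\sim}\mathcal N(0,W)$, $v_t\overset{iid}{\sim}\mathcal N(0,V)$, the two noise sequences independent. Assume $(A,W^{1/2})$ is stabilizable and $(A,C)$ is detectable. Let $\Sigma\succeq0$ be the unique positive semidefinite solution of $\Sigma=A\Sigma A^\top-A\Sigma C^\top(C\Sigma C^\top+V)^{-1}C\Sigma A^\top+W$ and $L=A\Sigma C^\top(C\Sigma C^\top+V)^{-1}$. Known constants $\alpha_0,\alpha_1,\psi,\bar\sigma>0$ satisfy $\alpha_0I_n\preceq W\preceq\alpha_1I_n$, $\alpha_0I_p\preceq V\preceq\alpha_1I_p$, $\|C\|\le\psi$, $\|\Sigma\|\le\bar\sigma$. Set $\kappa_F=\sqrt{\bar\sigma/\alpha_0}$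 and $\gamma_F=1-\frac{\alpha_0}{2\bar\sigma}$. $\|\cdot\|$ is the Euclidean/spectral norm and $\|\cdot\|_F$ the Frobenius norm. Finite-horizon Kalman recursion: $\Sigma_0=0$, $\Sigma_{t+1}=A\Sigma_tA^\top-A\Sigma_tC^\top(C\Sigma_tC^\top+V)^{-1}C\Sigma_tA^\top+W$, and $L_t=A\Sigma_tC^\top(C\Sigma_tC^\top+V)^{-1}$. For integers $k>l\ge0$, $\Psi_{k,l}=(A-L_{k-1}C)(A-L_{k-2}C)\cdots(A-L_lC)$, and $\Psi_{k,l}=I_n$ if $k\le l$. $\lambda_{\min}$ denotes the smallest eigenvalue. *)

theory Defs
  imports "HOL-Analysis.Analysis"
begin

type_synonym ('m,'n) rmat = "real^'n^'m"

definition spec_norm :: "real^'n^'m \<Rightarrow> real" where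
  "spec_norm M = onorm (\<lambda>x. M *v x)"

definition symm :: "real^'n^'n \<Rightarrow> bool" where
  "symm M \<longleftrightarrow> transpose M = M"

definition psd :: "real^'n^'n \<Rightarrow> bool" where
  "psd M \<longleftrightarrow> symm M \<and> (\<forall>x. 0 \<le> x \<bullet> (M *v x))"

definition loewner_le :: "real^'n^'n \<Rightarrow> real^'n^'n \<Rightarrow> bool" where
  "loewner_le M N \<longleftrightarrow> psd (N - M)"

text \<open>Smallest eigenvalue (used only for symmetric matrices, whose eigenvalues are real).\<close>
definition lambda_min :: "real^'n^'n \<Rightarrow> real" where
  "lambda_min M = Min {l. \<exists>v. v \<noteq> 0 \<and> M *v v = l *\<^sub>R v}"

definition matpow :: "real^'n^'n \<Rightarrow> nat \<Rightarrow> real^'n^'n" where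
  "matpow M k = ((\<lambda>N. M ** N) ^^ k) (mat 1)"

text \<open>Schur stability (spectral radius < 1), expressed as M^k \<rightarrow> 0.\<close>
definition schur_stable :: "real^'n^'n \<Rightarrow> bool" where
  "schur_stable M \<longleftrightarrow> (\<lambda>k. matpow M k) \<longlonglongrightarrow> 0"

definition stabilizable :: "real^'n^'n \<Rightarrow> real^'k^'n \<Rightarrow> bool" where
  "stabilizable A B \<longleftrightarrow> (\<exists>K :: real^'n^'k. schur_stable (A + B ** K))"

definition detectable :: "real^'n^'n \<Rightarrow> real^'n^'p \<Rightarrow> bool" where
  "detectable A C \<longleftrightarrow> (\<exists>L :: real^'p^'n. schur_stable (A + L ** C))"

definition riccati ::
  "real^'n^'n \<Rightarrow> real^'n^'p \<Rightarrow> real^'n^'n \<Rightarrow> real^'p^'p \<Rightarrow> real^'n^'n \<Rightarrow> real^'n^'n" where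
  "riccati A C W V S =
     A ** S ** transpose A
     - A ** S ** transpose C ** matrix_inv (C ** S ** transpose C + V) ** C ** S ** transpose A
     + W"

definition kgain ::
  "real^'n^'n \<Rightarrow> real^'n^'p \<Rightarrow> real^'p^'p \<Rightarrow> real^'n^'n \<Rightarrow> real^'p^'n" where
  "kgain A C V S = A ** S ** transpose C ** matrix_inv (C ** S ** transpose C + V)"

primrec kf_Sigma ::
  "real^'n^'n \<Rightarrow> real^'n^'p \<Rightarrow> real^'n^'n \<Rightarrow> real^'p^'p \<Rightarrow> nat \<Rightarrow> real^'n^'n" where
  "kf_Sigma A C W V 0 = 0"
| "kf_Sigma A C W V (Suc t) = riccati A C W V (kf_Sigma A C W V t)"

definition kf_L ::
  "real^'n^'n \<Rightarrow> real^'n^'p \<Rightarrow> real^'n^'n \<Rightarrow> real^'p^'p \<Rightarrow> nat \<Rightarrow> real^'p^'n" where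
  "kf_L A C W V t = kgain A C V (kf_Sigma A C W V t)"

fun kf_Psi ::
  "real^'n^'n \<Rightarrow> real^'n^'p \<Rightarrow> real^'n^'n \<Rightarrow> real^'p^'p \<Rightarrow> nat \<Rightarrow> nat \<Rightarrow> real^'n^'n" where
  "kf_Psi A C W V 0 l = mat 1"
| "kf_Psi A C W V (Suc k) l =
     (if Suc k \<le> l then mat 1
      else (A - kf_L A C W V k ** C) ** kf_Psi A C W V k l)"

end

theory Submission
  imports Defs
begin

text \<open>
  Write F = A - L C for the stationary closed loop. Because W dominates (alpha0/sigmabar) Sigma,
  the stationary Riccati equation makes F transposed a contraction in the Sigma-norm with rate
  1 - alpha0/sigmabar, whence norm (F^k) is at most kappa_F gamma_F^k. Subtracting the
  stationary from the finite-horizon Riccati equation gives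
  Sigma_(t+1) - Sigma = F (Sigma_t - Sigma) (A - L_t C)^T, so
  Sigma_t - Sigma = F^(t-1) (W - Sigma) Psi_(t,1)^T, and
  L_t - L = (A - L_t C) (Sigma_t - Sigma) C^T (C Sigma C^T + V)^(-1).
  The remaining factors are bounded through alpha0 I <= Sigma_t <= Sigma: the Joseph form of the
  Riccati map gives alpha0 norm (Psi_(t,1)^T x)^2 <= x^T Sigma_t x, and similarly for A - L_t C.
  The square root in the statement is at least 1 and only weakens the bounds.
\<close>

section \<open>Spectral norm\<close>

lemma norm_matrix_vector_mult_le: "norm ((M::real^'n^'m) *v x) \<le> spec_norm M * norm x"
  unfolding spec_norm_def by (rule onorm[OF matrix_vector_mul_bounded_linear])

lemma spec_norm_le: "(\<And>x. norm ((M::real^'n^'m) *v x) \<le> b * norm x) \<Longrightarrow> spec_norm M \<le> b"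
  unfolding spec_norm_def by (rule onorm_le)

lemma spec_norm_nonneg: "0 \<le> spec_norm (M::real^'n^'m)"
  unfolding spec_norm_def by (rule onorm_pos_le[OF matrix_vector_mul_bounded_linear])

lemma spec_norm_matrix_mul: "spec_norm ((X::real^'n^'m) ** (Y::real^'k^'n)) \<le> spec_norm X * spec_norm Y"
proof (rule spec_norm_le)
  fix x
  have "norm ((X ** Y) *v x) \<le> spec_norm X * norm (Y *v x)"
    by (simp flip: matrix_vector_mul_assoc add: norm_matrix_vector_mult_le)
  also have "\<dots> \<le> spec_norm X * (spec_norm Y * norm x)"
    by (rule mult_left_mono[OF norm_matrix_vector_mult_le spec_norm_nonneg])
  finally show "norm ((X ** Y) *v x) \<le> spec_norm X * spec_norm Y * norm x" by (simp add: mult_ac)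
qed

lemma inner_matrix_vector_transpose: "y \<bullet> ((M::real^'n^'m) *v x) = (transpose M *v y) \<bullet> x"
  by (simp add: dot_lmul_matrix)

lemma spec_norm_le_transpose: "spec_norm (M::real^'n^'m) \<le> spec_norm (transpose M)"
proof (rule spec_norm_le)
  fix x
  have "(norm (M *v x))\<^sup>2 = (transpose M *v (M *v x)) \<bullet> x"
    by (simp add: power2_norm_eq_inner inner_matrix_vector_transpose)
  also have "\<dots> \<le> spec_norm (transpose M) * norm (M *v x) * norm x"
    by (meson Cauchy_Schwarz_ineq2 abs_ge_self norm_matrix_vector_mult_le
        mult_right_mono norm_ge_zero order_trans)
  finally show "norm (M *v x) \<le> spec_norm (transpose M) * norm x"
    by (cases "M *v x = 0") (simp_all add: spec_norm_nonneg power2_eq_square mult_ac)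
qed

lemma spec_norm_transpose: "spec_norm (transpose (M::real^'n^'m)) = spec_norm M"
  using spec_norm_le_transpose[of M] spec_norm_le_transpose[of "transpose M"] by simp

lemma inner_matrix_vector_le_spec_norm: "x \<bullet> ((M::real^'n^'n) *v x) \<le> spec_norm M * (norm x)\<^sup>2"
proof -
  have "x \<bullet> (M *v x) \<le> norm x * norm (M *v x)"
    by (rule Cauchy_Schwarz_ineq2[THEN order_trans[OF abs_ge_self]])
  also have "\<dots> \<le> norm x * (spec_norm M * norm x)"
    by (rule mult_left_mono[OF norm_matrix_vector_mult_le norm_ge_zero])
  finally show ?thesis by (simp add: power2_eq_square mult_ac)
qed

lemma spec_norm_le_sqrt_of_quadratic:
  fixes M :: "real^'n^'m"
  assumes bound: "\<And>x. a * (norm (M *v x))\<^sup>2 \<le> b * (norm x)\<^sup>2" and "a > 0" "b \<ge> 0"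
  shows "spec_norm M \<le> sqrt (b / a)"
proof (rule spec_norm_le)
  fix x
  have "(norm (M *v x))\<^sup>2 \<le> (sqrt (b / a) * norm x)\<^sup>2"
    using bound[of x] \<open>a > 0\<close> \<open>b \<ge> 0\<close> by (simp add: power_mult_distrib field_simps)
  then show "norm (M *v x) \<le> sqrt (b / a) * norm x"
    by (rule power2_le_imp_le) (use \<open>a > 0\<close> \<open>b \<ge> 0\<close> in simp)
qed

section \<open>Matrix algebra and positive semidefinite matrices\<close>

lemma matrix_add_rdistrib: "((X::real^'n^'m) + Y) ** Z = X ** Z + Y ** Z"
  by (simp add: matrix_matrix_mult_def vec_eq_iff sum.distrib distrib_right)

lemma matrix_diff_ldistrib: "(X::real^'n^'m) ** (Y - Z) = X ** Y - X ** Z"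
  by (simp add: matrix_matrix_mult_def vec_eq_iff sum_subtractf right_diff_distrib)

lemma matrix_diff_rdistrib: "((X::real^'n^'m) - Y) ** Z = X ** Z - Y ** Z"
  by (simp add: matrix_matrix_mult_def vec_eq_iff sum_subtractf left_diff_distrib)

lemma transpose_add: "transpose ((X::real^'n^'m) + Y) = transpose X + transpose Y"
  by (simp add: transpose_def vec_eq_iff)

lemma transpose_diff: "transpose ((X::real^'n^'m) - Y) = transpose X - transpose Y"
  by (simp add: transpose_def vec_eq_iff)

lemmas matrix_ring_simps = matrix_mul_assoc matrix_add_ldistrib matrix_add_rdistrib
  matrix_diff_ldistrib matrix_diff_rdistrib matrix_transpose_mul transpose_add transpose_diff

lemma matrix_inv:
  assumes "invertible (M::real^'n^'n)"
  shows matrix_inv_right: "M ** matrix_inv M = mat 1"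
    and matrix_inv_left: "matrix_inv M ** M = mat 1"
proof -
  have "\<exists>N. M ** N = mat 1 \<and> N ** M = mat 1" using assms unfolding invertible_def by blast
  then have "M ** matrix_inv M = mat 1 \<and> matrix_inv M ** M = mat 1"
    unfolding matrix_inv_def by (rule someI_ex)
  then show "M ** matrix_inv M = mat 1" "matrix_inv M ** M = mat 1" by auto
qed

lemma transpose_matrix_inv_symm:
  assumes "invertible (M::real^'n^'n)" "symm M"
  shows "transpose (matrix_inv M) = matrix_inv M"
proof -
  have "transpose (matrix_inv M) ** M = mat 1"
    using matrix_inv_right[OF assms(1)] assms(2) unfolding symm_def
    by (metis matrix_transpose_mul transpose_mat)
  then have "transpose (matrix_inv M) = transpose (matrix_inv M) ** (M ** matrix_inv M)"
    using matrix_inv_right[OF assms(1)] by simp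
  also have "\<dots> = matrix_inv M"
    by (simp add: matrix_mul_assoc \<open>transpose (matrix_inv M) ** M = mat 1\<close>)
  finally show ?thesis .
qed

lemma inner_sandwich:
  fixes B :: "real^'m^'n" and S :: "real^'m^'m"
  shows "x \<bullet> ((B ** S ** transpose B) *v x) = (transpose B *v x) \<bullet> (S *v (transpose B *v x))"
  by (simp flip: matrix_vector_mul_assoc add: inner_matrix_vector_transpose)

lemma inner_matrix_add: "x \<bullet> (((X::real^'n^'n) + Y) *v x) = x \<bullet> (X *v x) + x \<bullet> (Y *v x)"
  by (simp add: matrix_vector_mult_add_rdistrib inner_add_right)

lemma symm_inner_commute: "symm M \<Longrightarrow> x \<bullet> ((M::real^'n^'n) *v y) = y \<bullet> (M *v x)"
  unfolding symm_def by (metis inner_matrix_vector_transpose inner_commute)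

lemma symm_sandwich: "symm S \<Longrightarrow> symm (B ** S ** transpose B)"
  unfolding symm_def by (simp add: matrix_transpose_mul matrix_mul_assoc)

lemma symm_add: "symm X \<Longrightarrow> symm Y \<Longrightarrow> symm (X + Y)"
  unfolding symm_def by (simp add: transpose_add)

lemma psd_symm: "psd S \<Longrightarrow> symm S"
  unfolding psd_def by blast

lemma psd_nonneg: "psd S \<Longrightarrow> 0 \<le> x \<bullet> (S *v x)"
  unfolding psd_def by blast

lemma psd_zero: "psd 0"
  unfolding psd_def symm_def by (simp add: transpose_def vec_eq_iff)

lemma matrix_vector_mult_scaled_identity: "(c *\<^sub>R mat 1) *v (y::real^'n) = c *\<^sub>R y"
  by (metis scaleR_matrix_vector_assoc matrix_vector_mul_lid)

lemma loewner_le_scaled_identityD: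
  assumes "loewner_le (c *\<^sub>R mat 1) (M::real^'n^'n)"
  shows "c * (norm x)\<^sup>2 \<le> x \<bullet> (M *v x)"
proof -
  have "0 \<le> x \<bullet> ((M - c *\<^sub>R mat 1) *v x)"
    using assms unfolding loewner_le_def psd_def by blast
  then show ?thesis
    by (simp add: matrix_vector_mult_diff_rdistrib matrix_vector_mult_scaled_identity inner_diff_right
        power2_norm_eq_inner)
qed

section \<open>The smallest eigenvalue of a symmetric matrix\<close>

lemma symm_quadratic_zero_imp_kernel:
  fixes P :: "real^'n^'n"
  assumes "symm P" and nonneg: "\<And>y. 0 \<le> y \<bullet> (P *v y)" and "u \<bullet> (P *v u) = 0"
  shows "P *v u = 0"
proof (rule ccontr)
  assume "P *v u \<noteq> 0"
  define y where "y = P *v u"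
  define r where "r = (y \<bullet> y) / (y \<bullet> (P *v y) + 1)"
  have y_pos: "0 < y \<bullet> y" and Py_nonneg: "0 \<le> y \<bullet> (P *v y)"
    using \<open>P *v u \<noteq> 0\<close> nonneg unfolding y_def by auto
  then have r_pos: "0 < r" unfolding r_def by simp
  have y_eq: "y \<bullet> y = r * (y \<bullet> (P *v y) + 1)"
    using Py_nonneg unfolding r_def by (simp add: field_simps)
  \<comment> \<open>Moving from the zero u of the form in direction -y decreases it to first order.\<close>
  have "(u - r *\<^sub>R y) \<bullet> (P *v (u - r *\<^sub>R y)) = r\<^sup>2 * (y \<bullet> (P *v y)) - 2 * r * (y \<bullet> y)"
    using symm_inner_commute[OF \<open>symm P\<close>, of u y] \<open>u \<bullet> (P *v u) = 0\<close>
    by (simp add: y_def matrix_vector_mult_diff_distrib matrix_vector_mult_scaleR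
        inner_diff_left inner_diff_right power2_eq_square algebra_simps)
  also have "\<dots> = r\<^sup>2 * (y \<bullet> (P *v y) - 2 * (y \<bullet> (P *v y) + 1))"
    unfolding y_eq by (simp add: power2_eq_square algebra_simps)
  also have "\<dots> < 0"
    using r_pos Py_nonneg by (intro mult_pos_neg) auto
  finally show False using nonneg[of "u - r *\<^sub>R y"] by simp
qed

lemma symm_min_quadratic_eigenvector:
  fixes M :: "real^'n^'n"
  assumes "symm M"
  obtains m u where "u \<noteq> 0" "M *v u = m *\<^sub>R u" "\<And>x. m * (norm x)\<^sup>2 \<le> x \<bullet> (M *v x)"
proof -
  define f where "f x = x \<bullet> (M *v x)" for x :: "real^'n"
  have "continuous_on (sphere 0 1) f"
    unfolding f_def by (intro continuous_intros linear_continuous_on matrix_vector_mul_bounded_linear)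
  moreover obtain i :: 'n where True by simp
  then have "sphere (0::real^'n) 1 \<noteq> {}" by (auto intro!: exI[of _ "axis i 1"])
  ultimately obtain u where u: "norm u = 1" and u_min: "\<And>y. norm y = 1 \<Longrightarrow> f u \<le> f y"
    using continuous_attains_inf[OF compact_sphere] by (metis mem_sphere_0)
  have lower: "f u * (norm x)\<^sup>2 \<le> f x" for x
  proof (cases "x = 0")
    case False
    then have "f u \<le> f (inverse (norm x) *\<^sub>R x)" by (intro u_min) simp
    also have "\<dots> = f x / (norm x)\<^sup>2"
      by (simp add: f_def matrix_vector_mult_scaleR power2_eq_square field_simps)
    finally show ?thesis using False by (simp add: field_simps)
  qed (simp add: f_def)
  define P where "P = M - f u *\<^sub>R mat 1"
  have P_form: "y \<bullet> (P *v y) = f y - f u * (norm y)\<^sup>2" for y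
    by (simp add: P_def f_def matrix_vector_mult_diff_rdistrib power2_norm_eq_inner
        matrix_vector_mult_scaled_identity inner_diff_right)
  have "symm P"
    using \<open>symm M\<close> unfolding P_def symm_def by (simp add: transpose_diff transpose_scalar)
  moreover have "0 \<le> y \<bullet> (P *v y)" for y using P_form lower by simp
  moreover have "u \<bullet> (P *v u) = 0" using P_form u by simp
  ultimately have "P *v u = 0" by (rule symm_quadratic_zero_imp_kernel)
  then have "M *v u = f u *\<^sub>R u"
    by (simp add: P_def matrix_vector_mult_diff_rdistrib matrix_vector_mult_scaled_identity)
  then show ?thesis
    using u lower by (intro that[of u "f u"]) (auto simp: f_def)
qed

lemma symm_eigenvalues_finite:
  fixes M :: "real^'n^'n"
  assumes "symm M"
  shows "finite {l. \<exists>v. v \<noteq> 0 \<and> M *v v = l *\<^sub>R v}" (is "finite ?E")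
proof -
  define ev where "ev l = (SOME v. v \<noteq> 0 \<and> M *v v = l *\<^sub>R v)" for l
  have ev: "ev l \<noteq> 0 \<and> M *v ev l = l *\<^sub>R ev l" if "l \<in> ?E" for l
    using that unfolding ev_def mem_Collect_eq by (rule someI_ex)
  have orth: "ev l \<bullet> ev k = 0" if "l \<in> ?E" "k \<in> ?E" "l \<noteq> k" for l k
  proof -
    have "l * (ev l \<bullet> ev k) = ev k \<bullet> (M *v ev l)" using ev[OF that(1)] by (simp add: inner_commute)
    also have "\<dots> = ev l \<bullet> (M *v ev k)" using symm_inner_commute[OF assms] by simp
    also have "\<dots> = k * (ev l \<bullet> ev k)" using ev[OF that(2)] by simp
    finally show ?thesis using that(3) by simp
  qed
  have "inj_on ev ?E"
  proof (rule inj_onI, rule ccontr)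
    fix l k assume lk: "l \<in> ?E" "k \<in> ?E" "ev l = ev k" "l \<noteq> k"
    have "ev l \<bullet> ev l = 0" using orth[OF lk(1,2,4)] lk(3) by simp
    with ev[OF lk(1)] show False by simp
  qed
  moreover have "pairwise orthogonal (ev ` ?E)"
  proof (rule pairwiseI)
    fix x y assume "x \<in> ev ` ?E" "y \<in> ev ` ?E" "x \<noteq> y"
    then obtain l k where "l \<in> ?E" "k \<in> ?E" "l \<noteq> k" "x = ev l" "y = ev k" by blast
    then show "orthogonal x y" unfolding orthogonal_def using orth by blast
  qed
  then have "finite (ev ` ?E)" by (rule pairwise_orthogonal_imp_finite)
  ultimately show ?thesis using finite_imageD by blast
qed

lemma lambda_min_symm:
  fixes M :: "real^'n^'n"
  assumes "symm M"
  shows lambda_min_le_quadratic: "lambda_min M * (norm x)\<^sup>2 \<le> x \<bullet> (M *v x)"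
    and lambda_min_eigenvector: "\<exists>v. v \<noteq> 0 \<and> M *v v = lambda_min M *\<^sub>R v"
proof -
  obtain m u where u: "u \<noteq> 0" "M *v u = m *\<^sub>R u" and lower: "\<And>x. m * (norm x)\<^sup>2 \<le> x \<bullet> (M *v x)"
    using symm_min_quadratic_eigenvector[OF assms] by blast
  have "m \<le> l" if "v \<noteq> 0" "M *v v = l *\<^sub>R v" for l v
    using lower[of v] that by (simp add: power2_norm_eq_inner)
  then have "lambda_min M = m"
    unfolding lambda_min_def using u symm_eigenvalues_finite[OF assms] by (intro Min_eqI) blast+
  then show "lambda_min M * (norm x)\<^sup>2 \<le> x \<bullet> (M *v x)" "\<exists>v. v \<noteq> 0 \<and> M *v v = lambda_min M *\<^sub>R v"
    using lower u by blast+
qed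

lemma lambda_min_ge:
  fixes M :: "real^'n^'n"
  assumes "symm M" and "\<And>x. a * (norm x)\<^sup>2 \<le> x \<bullet> (M *v x)"
  shows "a \<le> lambda_min M"
proof -
  obtain v where "v \<noteq> 0" "M *v v = lambda_min M *\<^sub>R v"
    using lambda_min_eigenvector[OF assms(1)] by blast
  then show ?thesis using assms(2)[of v] by (simp add: power2_norm_eq_inner)
qed

lemma lambda_min_le:
  fixes M :: "real^'n^'n"
  assumes "symm M" and "\<And>x. x \<bullet> (M *v x) \<le> b * (norm x)\<^sup>2"
  shows "lambda_min M \<le> b"
proof -
  obtain v where "v \<noteq> 0" "M *v v = lambda_min M *\<^sub>R v"
    using lambda_min_eigenvector[OF assms(1)] by blast
  then show ?thesis using assms(2)[of v] by (simp add: power2_norm_eq_inner)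
qed

lemma one_le_sqrt_spec_norm_div_lambda_min:
  fixes W P :: "real^'n^'n"
  assumes "symm W" "psd P" "lambda_min W > 0" "0 < c" "c \<le> 1"
  shows "1 \<le> sqrt (spec_norm (W + P) / (lambda_min W * c))"
proof -
  have "x \<bullet> (W *v x) \<le> spec_norm (W + P) * (norm x)\<^sup>2" for x
    using psd_nonneg[OF assms(2), of x] inner_matrix_vector_le_spec_norm[of x "W + P"]
    by (simp add: inner_matrix_add)
  then have "lambda_min W \<le> spec_norm (W + P)"
    by (rule lambda_min_le[OF assms(1)])
  moreover have "lambda_min W * c \<le> lambda_min W"
    using assms(3,5) by (simp add: mult_left_le)
  ultimately have "lambda_min W * c \<le> spec_norm (W + P)"
    by linarith
  then have "1 \<le> spec_norm (W + P) / (lambda_min W * c)"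
    using assms(3,4) by (simp add: le_divide_eq_1_pos)
  then show ?thesis by simp
qed

section \<open>Matrix powers and the Riccati map\<close>

lemma matpow_0 [simp]: "matpow M 0 = mat 1"
  and matpow_Suc: "matpow M (Suc k) = M ** matpow M k"
  by (simp_all add: matpow_def)

lemma matpow_mult_commute: "matpow (M::real^'n^'n) k ** M = M ** matpow M k"
proof (induction k)
  case (Suc k)
  then show ?case by (simp add: matpow_Suc flip: matrix_mul_assoc)
qed simp

lemma transpose_matpow: "transpose (matpow (M::real^'n^'n) k) = matpow (transpose M) k"
  by (induction k) (simp_all add: matpow_Suc matrix_transpose_mul matpow_mult_commute)

lemma quadratic_bounds_le:
  fixes P :: "real^'n^'n"
  assumes "\<And>x. a * (norm x)\<^sup>2 \<le> x \<bullet> (P *v x)" "\<And>x. x \<bullet> (P *v x) \<le> b * (norm x)\<^sup>2"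
  shows "a \<le> b"
proof -
  obtain i :: 'n where True by simp
  show ?thesis using assms[of "axis i 1"] by simp
qed

lemma spec_norm_matpow_le_lyapunov:
  fixes G P :: "real^'n^'n"
  assumes lower: "\<And>x. a * (norm x)\<^sup>2 \<le> x \<bullet> (P *v x)"
    and upper: "\<And>x. x \<bullet> (P *v x) \<le> b * (norm x)\<^sup>2"
    and decrease: "\<And>x. (G *v x) \<bullet> (P *v (G *v x)) \<le> r * (x \<bullet> (P *v x))"
    and "a > 0" "r \<ge> 0"
  shows "spec_norm (matpow G k) \<le> sqrt (b / a) * sqrt r ^ k"
proof -
  have iterate: "(matpow G k *v x) \<bullet> (P *v (matpow G k *v x)) \<le> r ^ k * (x \<bullet> (P *v x))" for x
  proof (induction k)
    case (Suc k)
    have "(matpow G (Suc k) *v x) \<bullet> (P *v (matpow G (Suc k) *v x))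
        \<le> r * ((matpow G k *v x) \<bullet> (P *v (matpow G k *v x)))"
      unfolding matpow_Suc matrix_vector_mul_assoc[symmetric] by (rule decrease)
    also have "\<dots> \<le> r ^ Suc k * (x \<bullet> (P *v x))"
      using mult_left_mono[OF Suc.IH \<open>r \<ge> 0\<close>] by simp
    finally show ?case .
  qed simp
  have "a \<le> b" using lower upper by (rule quadratic_bounds_le)
  have "a * (norm (matpow G k *v x))\<^sup>2 \<le> (r ^ k * b) * (norm x)\<^sup>2" for x
    using lower[of "matpow G k *v x"] iterate[of x] mult_left_mono[OF upper[of x], of "r ^ k"]
    by (simp add: \<open>r \<ge> 0\<close> mult_ac)
  then have "spec_norm (matpow G k) \<le> sqrt (r ^ k * b / a)"
    by (rule spec_norm_le_sqrt_of_quadratic) (use \<open>a > 0\<close> \<open>a \<le> b\<close> \<open>r \<ge> 0\<close> in simp_all)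
  also have "\<dots> = sqrt (b / a) * sqrt r ^ k"
    by (simp add: real_sqrt_mult real_sqrt_power flip: times_divide_eq_right)
  finally show ?thesis .
qed

lemma transpose_kgain:
  assumes "symm S" "symm V" "invertible (C ** S ** transpose C + V)"
  shows "transpose (kgain A C V S) = matrix_inv (C ** S ** transpose C + V) ** C ** S ** transpose A"
proof -
  have "symm (C ** S ** transpose C + V)" by (intro symm_add symm_sandwich assms)
  then show ?thesis
    using transpose_matrix_inv_symm[OF assms(3)] \<open>symm S\<close>
    unfolding kgain_def symm_def by (simp add: matrix_transpose_mul matrix_mul_assoc)
qed

lemma riccati_cross_term:
  fixes A S W :: "real^'n^'n" and C :: "real^'n^'p" and V :: "real^'p^'p" and K :: "real^'p^'n"
  assumes "symm S" "symm V" and inv: "invertible (C ** S ** transpose C + V)"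
  shows "(A - K ** C) ** S ** transpose (A - kgain A C V S ** C)
     = riccati A C W V S - W - K ** V ** transpose (kgain A C V S)"
proof -
  define M where "M = C ** S ** transpose C + V"
  define Mi where "Mi = matrix_inv M"
  have KM: "K ** C ** S ** transpose C = K ** M - K ** V"
    unfolding M_def by (simp add: matrix_add_ldistrib matrix_mul_assoc)
  have MMi: "K ** M ** Mi = K"
    using matrix_inv_right[OF inv] unfolding M_def Mi_def by (simp flip: matrix_mul_assoc)
  have "transpose (kgain A C V S) = Mi ** C ** S ** transpose A"
    unfolding Mi_def M_def by (rule transpose_kgain[OF assms])
  then show ?thesis
    unfolding riccati_def kgain_def M_def[symmetric] Mi_def[symmetric]
    by (simp add: matrix_ring_simps KM MMi algebra_simps)
qed

lemma riccati_completion: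
  fixes A S W :: "real^'n^'n" and C :: "real^'n^'p" and V :: "real^'p^'p" and K :: "real^'p^'n"
  assumes "symm S" "symm V" and inv: "invertible (C ** S ** transpose C + V)"
  shows "(A - K ** C) ** S ** transpose (A - K ** C) + W + K ** V ** transpose K
     = riccati A C W V S
       + (K - kgain A C V S) ** (C ** S ** transpose C + V) ** transpose (K - kgain A C V S)"
proof -
  define M where "M = C ** S ** transpose C + V"
  define Mi where "Mi = matrix_inv M"
  have KM: "K ** C ** S ** transpose C = K ** M - K ** V"
    unfolding M_def by (simp add: matrix_add_ldistrib matrix_mul_assoc)
  have MMi: "X ** M ** Mi = X" and MiM: "X ** Mi ** M = X" for X :: "real^'p^'n"
    using matrix_inv_right[OF inv] matrix_inv_left[OF inv]
    unfolding M_def Mi_def by (simp_all flip: matrix_mul_assoc)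
  have "transpose (kgain A C V S) = Mi ** C ** S ** transpose A"
    unfolding Mi_def M_def by (rule transpose_kgain[OF assms])
  then show ?thesis
    unfolding riccati_def kgain_def M_def[symmetric] Mi_def[symmetric]
    by (simp add: matrix_ring_simps KM MMi MiM algebra_simps)
qed

lemma spec_norm_matrix_mul_le:
  fixes X :: "real^'n^'m" and Y :: "real^'k^'n"
  assumes "spec_norm X \<le> a" "spec_norm Y \<le> b"
  shows "spec_norm (X ** Y) \<le> a * b"
proof -
  have "spec_norm X * spec_norm Y \<le> a * b"
    using assms spec_norm_nonneg[of X] spec_norm_nonneg[of Y] by (intro mult_mono) auto
  then show ?thesis using spec_norm_matrix_mul[of X Y] by linarith
qed

lemma spec_norm_matrix_inv_le:
  fixes M :: "real^'n^'n"
  assumes "invertible M" "c > 0" and lower: "\<And>x. c * (norm x)\<^sup>2 \<le> x \<bullet> (M *v x)"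
  shows "spec_norm (matrix_inv M) \<le> 1 / c"
proof (rule spec_norm_le)
  fix z
  let ?w = "matrix_inv M *v z"
  have "M *v ?w = z" by (simp add: matrix_vector_mul_assoc matrix_inv_right[OF assms(1)])
  then have "c * (norm ?w)\<^sup>2 \<le> norm ?w * norm z"
    using lower[of ?w] Cauchy_Schwarz_ineq2[of ?w z] by simp
  then have "c * norm ?w \<le> norm z"
    by (cases "?w = 0") (simp_all add: power2_eq_square mult_ac)
  then show "norm ?w \<le> 1 / c * norm z"
    using \<open>c > 0\<close> by (simp add: field_simps mult.commute)
qed

section \<open>Convergence of the finite-horizon Kalman recursion\<close>

locale kalman_model =
  fixes A W :: "real^'n^'n" and C :: "real^'n^'p" and V :: "real^'p^'p" and a0 :: real
  assumes W_psd: "psd W" and V_psd: "psd V" and a0_pos: "a0 > 0"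
    and W_lower: "\<And>x. a0 * (norm x)\<^sup>2 \<le> x \<bullet> (W *v x)"
    and V_lower: "\<And>x. a0 * (norm x)\<^sup>2 \<le> x \<bullet> (V *v x)"
begin

abbreviation "Sigma_seq t \<equiv> kf_Sigma A C W V t"
abbreviation "L_seq t \<equiv> kf_L A C W V t"

lemma innovation_cov_ge_V:
  assumes "psd S"
  shows "x \<bullet> (V *v x) \<le> x \<bullet> ((C ** S ** transpose C + V) *v x)"
  using psd_nonneg[OF assms] by (simp add: inner_matrix_add inner_sandwich)

lemma innovation_cov_invertible:
  assumes "psd S"
  shows "invertible (C ** S ** transpose C + V)"
proof -
  have "x = 0" if "(C ** S ** transpose C + V) *v x = 0" for x
  proof -
    have "x \<bullet> (V *v x) \<le> 0" using innovation_cov_ge_V[OF assms, of x] that by simp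
    then have "a0 * (norm x)\<^sup>2 \<le> 0" using V_lower[of x] by linarith
    then show "x = 0" using a0_pos by (simp add: mult_le_0_iff)
  qed
  then show ?thesis
    unfolding invertible_left_inverse matrix_left_invertible_ker by blast
qed

lemma riccati_joseph_form:
  assumes "psd S"
  shows "riccati A C W V S
    = (A - kgain A C V S ** C) ** S ** transpose (A - kgain A C V S ** C) + W
      + kgain A C V S ** V ** transpose (kgain A C V S)"
  using riccati_cross_term[OF psd_symm[OF assms] psd_symm[OF V_psd] innovation_cov_invertible[OF assms],
      of A "kgain A C V S" W]
  by (simp add: algebra_simps)

lemma riccati_quadratic:
  assumes "psd S"
  shows "x \<bullet> (riccati A C W V S *v x)
    = (transpose (A - kgain A C V S ** C) *v x) \<bullet> (S *v (transpose (A - kgain A C V S ** C) *v x))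
      + x \<bullet> (W *v x) + (transpose (kgain A C V S) *v x) \<bullet> (V *v (transpose (kgain A C V S) *v x))"
  by (subst riccati_joseph_form[OF assms]) (simp only: inner_matrix_add inner_sandwich)

lemma riccati_ge_W:
  assumes "psd S"
  shows "x \<bullet> (W *v x) \<le> x \<bullet> (riccati A C W V S *v x)"
  using riccati_quadratic[OF assms, of x] psd_nonneg[OF assms] psd_nonneg[OF V_psd] by smt

lemma psd_riccati:
  assumes "psd S"
  shows "psd (riccati A C W V S)"
  unfolding psd_def
proof
  show "symm (riccati A C W V S)"
    by (subst riccati_joseph_form[OF assms])
      (intro symm_add symm_sandwich psd_symm assms W_psd V_psd)
  show "\<forall>x. 0 \<le> x \<bullet> (riccati A C W V S *v x)"
    using riccati_ge_W[OF assms] psd_nonneg[OF W_psd] order_trans by blast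
qed

lemma riccati_quadratic_le_any_gain:
  assumes "psd S"
  shows "x \<bullet> (riccati A C W V S *v x)
    \<le> (transpose (A - K ** C) *v x) \<bullet> (S *v (transpose (A - K ** C) *v x))
      + x \<bullet> (W *v x) + (transpose K *v x) \<bullet> (V *v (transpose K *v x))"
proof -
  let ?D = "transpose (K - kgain A C V S) *v x"
  have "(transpose (A - K ** C) *v x) \<bullet> (S *v (transpose (A - K ** C) *v x))
      + x \<bullet> (W *v x) + (transpose K *v x) \<bullet> (V *v (transpose K *v x))
    = x \<bullet> (riccati A C W V S *v x) + ?D \<bullet> ((C ** S ** transpose C + V) *v ?D)"
    using riccati_completion[OF psd_symm[OF assms] psd_symm[OF V_psd]
        innovation_cov_invertible[OF assms], of A K W]
    by (metis inner_matrix_add inner_sandwich)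
  moreover have "0 \<le> ?D \<bullet> ((C ** S ** transpose C + V) *v ?D)"
    using innovation_cov_ge_V[OF assms] psd_nonneg[OF V_psd] order_trans by blast
  ultimately show ?thesis by linarith
qed

lemma psd_Sigma_seq: "psd (Sigma_seq t)"
  by (induction t) (simp_all add: psd_zero psd_riccati)

lemma Sigma_seq_lower:
  assumes "t \<ge> 1"
  shows "a0 * (norm x)\<^sup>2 \<le> x \<bullet> (Sigma_seq t *v x)"
proof -
  obtain k where "t = Suc k" using assms by (cases t) auto
  then show ?thesis using riccati_ge_W[OF psd_Sigma_seq[of k], of x] W_lower[of x] by simp
qed

lemma Sigma_seq_next_quadratic:
  "(transpose (A - L_seq t ** C) *v x) \<bullet> (Sigma_seq t *v (transpose (A - L_seq t ** C) *v x))
    \<le> x \<bullet> (Sigma_seq (Suc t) *v x) - x \<bullet> (W *v x)"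
  using riccati_quadratic[OF psd_Sigma_seq[of t], of x] psd_nonneg[OF V_psd]
  unfolding kf_L_def by simp

lemma Psi_quadratic_le:
  assumes "t \<ge> 1"
  shows "a0 * (norm (transpose (kf_Psi A C W V t 1) *v x))\<^sup>2 \<le> x \<bullet> (Sigma_seq t *v x)"
  using assms
proof (induction t arbitrary: x rule: dec_induct)
  case base
  then show ?case using Sigma_seq_lower[of 1 x] by simp
next
  case (step t)
  let ?y = "transpose (A - L_seq t ** C) *v x"
  have "transpose (kf_Psi A C W V (Suc t) 1) *v x = transpose (kf_Psi A C W V t 1) *v ?y"
    using step(1)
    by (simp add: matrix_transpose_mul matrix_vector_mul_assoc del: transpose_matrix_vector)
  then have "a0 * (norm (transpose (kf_Psi A C W V (Suc t) 1) *v x))\<^sup>2 \<le> ?y \<bullet> (Sigma_seq t *v ?y)"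
    using step.IH by simp
  also have "\<dots> \<le> x \<bullet> (Sigma_seq (Suc t) *v x)"
    using Sigma_seq_next_quadratic[of t x] psd_nonneg[OF W_psd, of x] by linarith
  finally show ?case .
qed

end

locale kalman_steady_state = kalman_model +
  fixes Sig and sb :: real
  assumes Sig_psd: "psd Sig" and Sig_dare: "Sig = riccati A C W V Sig"
    and Sig_upper: "\<And>x. x \<bullet> (Sig *v x) \<le> sb * (norm x)\<^sup>2"
begin

abbreviation "L_inf \<equiv> kgain A C V Sig"
abbreviation "closed_loop \<equiv> A - L_inf ** C"

abbreviation "kappa \<equiv> sqrt (sb / a0)"
abbreviation "gamma \<equiv> 1 - a0 / (2 * sb)"

lemma Sig_lower: "a0 * (norm x)\<^sup>2 \<le> x \<bullet> (Sig *v x)"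
  using riccati_ge_W[OF Sig_psd, of x] W_lower[of x] Sig_dare by simp

lemma a0_le_sb: "a0 \<le> sb"
  using Sig_lower Sig_upper by (rule quadratic_bounds_le)

lemma sb_pos: "sb > 0"
  using a0_pos a0_le_sb by simp

lemma gamma_bounds: "1 / 2 \<le> gamma" "gamma < 1"
  using a0_pos a0_le_sb sb_pos by (simp_all add: field_simps)

lemma gamma_square_bounds: "0 < 1 - gamma\<^sup>2" "1 - gamma\<^sup>2 \<le> 1"
proof -
  have "gamma\<^sup>2 < 1\<^sup>2"
    using gamma_bounds by (intro power_strict_mono) simp_all
  then show "0 < 1 - gamma\<^sup>2" "1 - gamma\<^sup>2 \<le> 1" by simp_all
qed

lemma kappa_pos: "kappa > 0"
  using a0_pos sb_pos by simp

lemma sqrt_contraction_le_gamma: "sqrt (1 - a0 / sb) \<le> gamma"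
proof -
  have "1 - a0 / sb \<le> gamma\<^sup>2"
    using sb_pos by (simp add: power2_eq_square field_simps)
  then show ?thesis
    using gamma_bounds(1) real_sqrt_le_mono by fastforce
qed

lemma closed_loop_lyapunov:
  "(transpose closed_loop *v x) \<bullet> (Sig *v (transpose closed_loop *v x)) \<le> (1 - a0 / sb) * (x \<bullet> (Sig *v x))"
proof -
  have "(a0 / sb) * (x \<bullet> (Sig *v x)) \<le> a0 * (norm x)\<^sup>2"
    using mult_left_mono[OF Sig_upper[of x], of "a0 / sb"] a0_pos sb_pos by simp
  also have "\<dots> \<le> x \<bullet> (W *v x)" by (rule W_lower)
  finally show ?thesis
    using riccati_quadratic[OF Sig_psd, of x] Sig_dare psd_nonneg[OF V_psd, of "transpose L_inf *v x"]
    by (simp add: algebra_simps)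
qed

lemma Sigma_seq_le: "x \<bullet> (Sigma_seq t *v x) \<le> x \<bullet> (Sig *v x)"
proof (induction t arbitrary: x)
  case (Suc t)
  have "x \<bullet> (Sigma_seq (Suc t) *v x)
      \<le> (transpose closed_loop *v x) \<bullet> (Sigma_seq t *v (transpose closed_loop *v x))
        + x \<bullet> (W *v x) + (transpose L_inf *v x) \<bullet> (V *v (transpose L_inf *v x))"
    using riccati_quadratic_le_any_gain[OF psd_Sigma_seq] by simp
  also have "\<dots> \<le> (transpose closed_loop *v x) \<bullet> (Sig *v (transpose closed_loop *v x))
        + x \<bullet> (W *v x) + (transpose L_inf *v x) \<bullet> (V *v (transpose L_inf *v x))"
    using Suc.IH by simp
  also have "\<dots> = x \<bullet> (Sig *v x)"
    using riccati_quadratic[OF Sig_psd, of x] Sig_dare by simp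
  finally show ?case .
qed (simp add: psd_nonneg[OF Sig_psd])

lemma spec_norm_closed_loop_pow: "spec_norm (matpow closed_loop k) \<le> kappa * gamma ^ k"
proof -
  have "spec_norm (matpow (transpose closed_loop) k) \<le> sqrt (sb / a0) * sqrt (1 - a0 / sb) ^ k"
    using a0_pos a0_le_sb sb_pos
    by (intro spec_norm_matpow_le_lyapunov[OF Sig_lower Sig_upper closed_loop_lyapunov])
      (simp_all add: field_simps)
  also have "\<dots> \<le> kappa * gamma ^ k"
    using a0_pos sb_pos a0_le_sb
    by (intro mult_left_mono power_mono sqrt_contraction_le_gamma) simp_all
  finally show ?thesis
    by (simp add: spec_norm_transpose flip: transpose_matpow)
qed

lemma Sigma_seq_Suc_error:
  "Sigma_seq (Suc t) - Sig = closed_loop ** (Sigma_seq t - Sig) ** transpose (A - L_seq t ** C)"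
proof -
  have seq: "closed_loop ** Sigma_seq t ** transpose (A - L_seq t ** C)
      = Sigma_seq (Suc t) - W - L_inf ** V ** transpose (L_seq t)"
    using riccati_cross_term[OF psd_symm[OF psd_Sigma_seq] psd_symm[OF V_psd]
        innovation_cov_invertible[OF psd_Sigma_seq[of t]], of A L_inf W]
    unfolding kf_L_def by simp
  have "(A - L_seq t ** C) ** Sig ** transpose closed_loop = Sig - W - L_seq t ** V ** transpose L_inf"
    using riccati_cross_term[OF psd_symm[OF Sig_psd] psd_symm[OF V_psd]
        innovation_cov_invertible[OF Sig_psd], of A "L_seq t" W] Sig_dare by simp
  then have "transpose ((A - L_seq t ** C) ** Sig ** transpose closed_loop)
      = transpose (Sig - W - L_seq t ** V ** transpose L_inf)"
    by simp
  then have stat: "closed_loop ** Sig ** transpose (A - L_seq t ** C) = Sig - W - L_inf ** V ** transpose (L_seq t)"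
    using psd_symm[OF Sig_psd] psd_symm[OF W_psd] psd_symm[OF V_psd]
    unfolding symm_def by (simp add: matrix_transpose_mul matrix_mul_assoc transpose_diff)
  show ?thesis
    using seq stat by (simp add: matrix_diff_ldistrib matrix_diff_rdistrib)
qed

lemma Sigma_seq_error:
  assumes "t \<ge> 1"
  shows "Sigma_seq t - Sig = matpow closed_loop (t - 1) ** (W - Sig) ** transpose (kf_Psi A C W V t 1)"
  using assms
proof (induction t rule: dec_induct)
  case base
  show ?case by (simp add: riccati_def)
next
  case (step t)
  have Psi: "transpose (kf_Psi A C W V (Suc t) 1) = transpose (kf_Psi A C W V t 1) ** transpose (A - L_seq t ** C)"
    using step.hyps by (simp add: matrix_transpose_mul)
  have pow: "closed_loop ** matpow closed_loop (t - 1) = matpow closed_loop (Suc t - 1)"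
    using step.hyps by (simp flip: matpow_Suc)
  have "Sigma_seq (Suc t) - Sig = closed_loop ** (Sigma_seq t - Sig) ** transpose (A - L_seq t ** C)"
    by (rule Sigma_seq_Suc_error)
  then show ?case
    unfolding step.IH Psi by (simp only: pow matrix_mul_assoc)
qed

lemma spec_norm_Psi_le:
  assumes "t \<ge> 1"
  shows "spec_norm (kf_Psi A C W V t 1) \<le> kappa"
proof -
  have "a0 * (norm (transpose (kf_Psi A C W V t 1) *v x))\<^sup>2 \<le> sb * (norm x)\<^sup>2" for x
    using Psi_quadratic_le[OF assms, of x] Sigma_seq_le[where t=t and x=x] Sig_upper[of x] by linarith
  then have "spec_norm (transpose (kf_Psi A C W V t 1)) \<le> kappa"
    by (rule spec_norm_le_sqrt_of_quadratic) (use a0_pos sb_pos in simp_all)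
  then show ?thesis by (simp add: spec_norm_transpose)
qed

lemma spec_norm_Sigma_seq_error:
  assumes "t \<ge> 1"
  shows "spec_norm (Sigma_seq t - Sig) \<le> kappa\<^sup>2 * gamma ^ (t - 1) * spec_norm (W - Sig)"
proof -
  have "spec_norm (transpose (kf_Psi A C W V t 1)) \<le> kappa"
    using spec_norm_Psi_le[OF assms] by (simp add: spec_norm_transpose)
  then have "spec_norm (Sigma_seq t - Sig) \<le> kappa * gamma ^ (t - 1) * spec_norm (W - Sig) * kappa"
    unfolding Sigma_seq_error[OF assms]
    by (intro spec_norm_matrix_mul_le spec_norm_closed_loop_pow order_refl)
  then show ?thesis by (simp only: power2_eq_square mult_ac)
qed

lemma spec_norm_gain_closed_loop:
  assumes "t \<ge> 1"
  shows "spec_norm (A - L_seq t ** C) \<le> kappa * gamma"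
proof -
  have "a0 * (norm (transpose (A - L_seq t ** C) *v x))\<^sup>2 \<le> (sb - a0) * (norm x)\<^sup>2" for x
    using Sigma_seq_lower[OF assms, of "transpose (A - L_seq t ** C) *v x"]
      Sigma_seq_next_quadratic[of t x] Sigma_seq_le[where t="Suc t" and x=x] Sig_upper[of x] W_lower[of x]
    by (simp add: algebra_simps)
  then have "spec_norm (transpose (A - L_seq t ** C)) \<le> sqrt ((sb - a0) / a0)"
    by (rule spec_norm_le_sqrt_of_quadratic) (use a0_pos a0_le_sb in simp_all)
  also have "sqrt ((sb - a0) / a0) = kappa * sqrt (1 - a0 / sb)"
    using a0_pos sb_pos by (simp add: real_sqrt_mult[symmetric] field_simps)
  also have "\<dots> \<le> kappa * gamma"
    using kappa_pos sqrt_contraction_le_gamma by simp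
  finally show ?thesis by (simp add: spec_norm_transpose)
qed

lemma gain_error:
  "L_seq t - L_inf
    = (A - L_seq t ** C) ** (Sigma_seq t - Sig) ** transpose C ** matrix_inv (C ** Sig ** transpose C + V)"
proof -
  define M where "M = C ** Sig ** transpose C + V"
  define Mt where "Mt = C ** Sigma_seq t ** transpose C + V"
  have "L_seq t ** Mt = A ** Sigma_seq t ** transpose C"
    using matrix_inv_left[OF innovation_cov_invertible[OF psd_Sigma_seq[of t]]]
    unfolding kf_L_def kgain_def Mt_def by (simp flip: matrix_mul_assoc)
  then have seq: "L_seq t ** C ** Sigma_seq t ** transpose C = A ** Sigma_seq t ** transpose C - L_seq t ** V"
    unfolding Mt_def by (simp add: matrix_add_ldistrib matrix_mul_assoc algebra_simps)
  have "L_inf ** M = A ** Sig ** transpose C"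
    using matrix_inv_left[OF innovation_cov_invertible[OF Sig_psd]]
    unfolding kgain_def M_def by (simp flip: matrix_mul_assoc)
  then have stat: "L_inf ** C ** Sig ** transpose C = A ** Sig ** transpose C - L_inf ** V"
    unfolding M_def by (simp add: matrix_add_ldistrib matrix_mul_assoc algebra_simps)
  have "(L_seq t - L_inf) ** M = (A - L_seq t ** C) ** (Sigma_seq t - Sig) ** transpose C"
    unfolding M_def by (simp add: matrix_ring_simps seq stat algebra_simps)
  then have "(L_seq t - L_inf) ** M ** matrix_inv M
      = (A - L_seq t ** C) ** (Sigma_seq t - Sig) ** transpose C ** matrix_inv M"
    by simp
  then show ?thesis
    using matrix_inv_right[OF innovation_cov_invertible[OF Sig_psd]]
    unfolding M_def by (simp flip: matrix_mul_assoc)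
qed

lemma spec_norm_gain_error:
  assumes "t \<ge> 1"
  shows "spec_norm (L_seq t - L_inf)
    \<le> kappa ^ 3 * gamma ^ t * spec_norm (W - Sig) * spec_norm C / lambda_min V"
proof -
  have "a0 \<le> lambda_min V"
    using psd_symm[OF V_psd] V_lower by (rule lambda_min_ge)
  then have "lambda_min V > 0" using a0_pos by simp
  moreover have "lambda_min V * (norm x)\<^sup>2 \<le> x \<bullet> ((C ** Sig ** transpose C + V) *v x)" for x
    using lambda_min_le_quadratic[OF psd_symm[OF V_psd], of x] innovation_cov_ge_V[OF Sig_psd, of x]
    by linarith
  ultimately have inv: "spec_norm (matrix_inv (C ** Sig ** transpose C + V)) \<le> 1 / lambda_min V"
    by (intro spec_norm_matrix_inv_le innovation_cov_invertible Sig_psd)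
  have "spec_norm (L_seq t - L_inf)
      \<le> kappa * gamma * (kappa\<^sup>2 * gamma ^ (t - 1) * spec_norm (W - Sig)) * spec_norm C * (1 / lambda_min V)"
    unfolding gain_error
    by (intro spec_norm_matrix_mul_le spec_norm_gain_closed_loop spec_norm_Sigma_seq_error assms inv)
      (simp add: spec_norm_transpose)
  also have "\<dots> = kappa ^ 3 * gamma ^ t * spec_norm (W - Sig) * spec_norm C / lambda_min V"
    using assms by (cases t) (simp_all add: power2_eq_square power3_eq_cube mult_ac)
  finally show ?thesis .
qed

lemma one_le_error_noise_factor:
  "1 \<le> sqrt (spec_norm (W + L_inf ** V ** transpose L_inf) / (lambda_min W * (1 - gamma\<^sup>2)))"
proof (rule one_le_sqrt_spec_norm_div_lambda_min)
  show "psd (L_inf ** V ** transpose L_inf)"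
    using V_psd unfolding psd_def by (simp add: symm_sandwich inner_sandwich)
  show "lambda_min W > 0"
    using lambda_min_ge[OF psd_symm[OF W_psd] W_lower] a0_pos by simp
qed (use psd_symm[OF W_psd] gamma_square_bounds in simp_all)

end

lemma kalman_steady_state_of_loewner:
  fixes A W Sig :: "real^'n^'n" and C :: "real^'n^'p" and V :: "real^'p^'p"
  assumes "psd W" "psd V" "a0 > 0"
    and W_lo: "loewner_le (a0 *\<^sub>R mat 1) W" and V_lo: "loewner_le (a0 *\<^sub>R mat 1) V"
    and "psd Sig" "Sig = riccati A C W V Sig" and Sig_bd: "spec_norm Sig \<le> sb"
  shows "kalman_steady_state A W C V a0 Sig sb"
proof unfold_locales
  show "a0 * (norm x)\<^sup>2 \<le> x \<bullet> (W *v x)" for x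
    using W_lo by (rule loewner_le_scaled_identityD)
  show "a0 * (norm y)\<^sup>2 \<le> y \<bullet> (V *v y)" for y
    using V_lo by (rule loewner_le_scaled_identityD)
  show "x \<bullet> (Sig *v x) \<le> sb * (norm x)\<^sup>2" for x
    using inner_matrix_vector_le_spec_norm[of x Sig] Sig_bd
    by (meson mult_right_mono order_trans zero_le_power2)
qed (use assms in simp_all)

theorem lemmaE5:
  fixes A W W12 Sigma :: "real^'n^'n"
    and C :: "real^'n^'p"
    and V :: "real^'p^'p"
    and L :: "real^'p^'n"
    and \<alpha>0 \<alpha>1 \<psi> \<sigma>bar \<kappa>F \<gamma>F :: real
    and t :: nat
  assumes W_psd: "psd W" and V_psd: "psd V"
    and W12: "psd W12" "W12 ** W12 = W"
    and stab: "stabilizable A W12"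
    and det: "detectable A C"
    and Sigma_psd: "psd Sigma"
    and Sigma_dare: "Sigma = riccati A C W V Sigma"
    and Sigma_unique: "\<And>S. psd S \<Longrightarrow> S = riccati A C W V S \<Longrightarrow> S = Sigma"
    and L_def: "L = kgain A C V Sigma"
    and pos: "\<alpha>0 > 0" "\<alpha>1 > 0" "\<psi> > 0" "\<sigma>bar > 0"
    and W_lo: "loewner_le (\<alpha>0 *\<^sub>R mat 1) W" and W_hi: "loewner_le W (\<alpha>1 *\<^sub>R mat 1)"
    and V_lo: "loewner_le (\<alpha>0 *\<^sub>R mat 1) V" and V_hi: "loewner_le V (\<alpha>1 *\<^sub>R mat 1)"
    and C_bd: "spec_norm C \<le> \<psi>"
    and Sigma_bd: "spec_norm Sigma \<le> \<sigma>bar"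
    and kappa_def: "\<kappa>F = sqrt (\<sigma>bar / \<alpha>0)"
    and gamma_def: "\<gamma>F = 1 - \<alpha>0 / (2 * \<sigma>bar)"
    and t_ge: "t \<ge> 1"
  shows "spec_norm (kf_Psi A C W V t 1)
           \<le> sqrt (spec_norm (W + L ** V ** transpose L) * \<kappa>F\<^sup>2
                    / (lambda_min W * (1 - \<gamma>F\<^sup>2)))
         \<and> spec_norm (kf_Sigma A C W V t - Sigma)
           \<le> \<kappa>F\<^sup>2 * \<gamma>F ^ (t - 1) * spec_norm (W - Sigma)
              * sqrt (spec_norm (W + L ** V ** transpose L)
                      / (lambda_min W * (1 - \<gamma>F\<^sup>2)))
         \<and> spec_norm (kf_L A C W V t - L)
           \<le> \<kappa>F ^ 3 * \<gamma>F ^ t * spec_norm (W - Sigma) * spec_norm C / lambda_min V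
              * sqrt (spec_norm (W + L ** V ** transpose L)
                      / (lambda_min W * (1 - \<gamma>F\<^sup>2)))"
proof -
  interpret kalman_steady_state A W C V \<alpha>0 Sigma \<sigma>bar
    by (rule kalman_steady_state_of_loewner[OF W_psd V_psd pos(1) W_lo V_lo Sigma_psd Sigma_dare Sigma_bd])
  define s where "s = sqrt (spec_norm (W + L ** V ** transpose L) / (lambda_min W * (1 - \<gamma>F\<^sup>2)))"
  have "1 \<le> s"
    unfolding s_def L_def gamma_def by (rule one_le_error_noise_factor)
  then have enlarge: "x \<le> b \<Longrightarrow> 0 \<le> x \<Longrightarrow> x \<le> b * s" for x b
    by (metis mult_left_mono mult.right_neutral order_trans)
  have Psi: "spec_norm (kf_Psi A C W V t 1) \<le> \<kappa>F * s"
    unfolding kappa_def by (rule enlarge[OF spec_norm_Psi_le[OF t_ge] spec_norm_nonneg])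
  have Sigma_err: "spec_norm (kf_Sigma A C W V t - Sigma) \<le> \<kappa>F\<^sup>2 * \<gamma>F ^ (t - 1) * spec_norm (W - Sigma) * s"
    unfolding kappa_def gamma_def by (rule enlarge[OF spec_norm_Sigma_seq_error[OF t_ge] spec_norm_nonneg])
  have gain_err: "spec_norm (kf_L A C W V t - L)
      \<le> \<kappa>F ^ 3 * \<gamma>F ^ t * spec_norm (W - Sigma) * spec_norm C / lambda_min V * s"
    unfolding kappa_def gamma_def L_def by (rule enlarge[OF spec_norm_gain_error[OF t_ge] spec_norm_nonneg])
  have sqrt_eq: "sqrt (spec_norm (W + L ** V ** transpose L) * \<kappa>F\<^sup>2 / (lambda_min W * (1 - \<gamma>F\<^sup>2)))
      = \<kappa>F * s"
    using kappa_pos[folded kappa_def] unfolding s_def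
    by (simp add: real_sqrt_mult mult.commute flip: times_divide_eq_right)
  show ?thesis
    using Psi Sigma_err gain_err unfolding sqrt_eq s_def by (intro conjI)
qed

end
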